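(* Let $e$ be a closed term with $\vdash e:\perp\to X$, where $X$ is a propositional variable. Then for each $\lambda$-variable $x$ and each finite sequence of $\lambda$-variables $\bar y$, $(e\;x)\;\bar y\triangleright^*\underline{\mu}.x$, i.e. $(e\;x)\;\bar y$ reduces to some element of $M_x$.
   Context: $\lambda\mu$-terms: $t::= x\mid \lambda x.t\mid (t\;t)\mid \mu a.t\mid (a\;t)$ over disjoint infinite sets of $\lambda$-variables and $\mu$-variables; types built from propositional variables and $\perp$ with $\to$. Reduction $(\lambda x.u\;v)\triangleright u[x:=v]$, $(\mu a.u\;v)\triangleright\mu a.u[a:=^*v]$ ($u[a:=^*v]$ replaces each subterm $(a\;w)$ of $u$ by $(a\;(w\;v))$), $\triangleright^*$ its reflexive transitive compatible closure. Typing rules: (ax) $\Gamma\vdash x:A;\Delta$ if $x:A\in\Gamma$; ($\to_i$) from $\Gamma,x:A\vdash t:B;\Delta$ infer $\Gamma\vdash\lambda x.t:A\to B;\Delta$; ($\to_e$) from $\Gamma\vdash u:A\to B;\Delta$, $\Gamma\vdash v:A;\Delta$ infer $\Gamma\vdash(u\;v):B;\Delta$; ($\mu$) from $\Gamma\vdash t:\perp;\Delta,a:A$ infer $\Gamma\vdash\mu a.t:A;\Delta$; ($\perp$) from $\Gamma\vdash t:A;\Delta,a:A$ infer $\Gamma\vdash(a\;t):\perp;\Delta,a:A$; $\vdash$ means empty contexts. For a sequence $\bar y=y_1\dots y_n$, $t\;\bar y=((t\;y_1)\dots y_n)$. For a term $t$, $M_t$ is the smallest set containing $t$ such that $u\in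 M_t$ and $a$ a $\mu$-variable imply $\mu a.u\in M_t$ and $(a\;u)\in M_t$; $\underline{\mu}.t$ denotes an arbitrary element of $M_t$. *)

theory Defs
  imports Main
begin

text \<open>Lambda-mu terms up to alpha-equivalence, with de Bruijn indices.
  Two separate index namespaces: lambda-variables (LVar) and mu-variables.
  Named a t is the term (a t).\<close>

datatype trm =
    LVar nat
  | Lam trm
  | App trm trm
  | Mu trm
  | Named nat trm

fun liftL :: "nat \<Rightarrow> trm \<Rightarrow> trm" where
  "liftL k (LVar i) = (if i < k then LVar i else LVar (Suc i))"
| "liftL k (Lam t) = Lam (liftL (Suc k) t)"
| "liftL k (App t u) = App (liftL k t) (liftL k u)"
| "liftL k (Mu t) = Mu (liftL k t)"
| "liftL k (Named a t) = Named a (liftL k t)"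

fun liftM :: "nat \<Rightarrow> trm \<Rightarrow> trm" where
  "liftM k (LVar i) = LVar i"
| "liftM k (Lam t) = Lam (liftM k t)"
| "liftM k (App t u) = App (liftM k t) (liftM k u)"
| "liftM k (Mu t) = Mu (liftM (Suc k) t)"
| "liftM k (Named a t) = Named (if a < k then a else Suc a) (liftM k t)"

text \<open>Capture-avoiding substitution t[k := s] of a lambda-variable
  (the binder for k is removed, so higher indices are decremented).\<close>
fun substL :: "trm \<Rightarrow> nat \<Rightarrow> trm \<Rightarrow> trm" where
  "substL (LVar i) k s = (if i < k then LVar i else if i = k then s else LVar (i - 1))"
| "substL (Lam t) k s = Lam (substL t (Suc k) (liftL 0 s))"
| "substL (App t u) k s = App (substL t k s) (substL u k s)"
| "substL (Mu t) k s = Mu (substL t k (liftM 0 s))"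
| "substL (Named a t) k s = Named a (substL t k s)"

text \<open>Structural substitution u[a :=* v]: each subterm (a w) becomes (a (w v)).
  The binder of a is kept, so no index is removed.\<close>
fun substM :: "trm \<Rightarrow> nat \<Rightarrow> trm \<Rightarrow> trm" where
  "substM (LVar i) a v = LVar i"
| "substM (Lam t) a v = Lam (substM t a (liftL 0 v))"
| "substM (App t u) a v = App (substM t a v) (substM u a v)"
| "substM (Mu t) a v = Mu (substM t (Suc a) (liftM 0 v))"
| "substM (Named b t) a v =
     (if b = a then Named b (App (substM t a v) v) else Named b (substM t a v))"

inductive red :: "trm \<Rightarrow> trm \<Rightarrow> bool" (infix "\<rhd>" 50) where
  beta: "App (Lam u) v \<rhd> substL u 0 v"
| mu:   "App (Mu u) v \<rhd> Mu (substM u 0 (liftM 0 v))"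
| lam:  "t \<rhd> t' \<Longrightarrow> Lam t \<rhd> Lam t'"
| appL: "t \<rhd> t' \<Longrightarrow> App t u \<rhd> App t' u"
| appR: "u \<rhd> u' \<Longrightarrow> App t u \<rhd> App t u'"
| muC:  "t \<rhd> t' \<Longrightarrow> Mu t \<rhd> Mu t'"
| named: "t \<rhd> t' \<Longrightarrow> Named a t \<rhd> Named a t'"

abbreviation reds :: "trm \<Rightarrow> trm \<Rightarrow> bool" (infix "\<rhd>\<^sup>*" 50) where
  "t \<rhd>\<^sup>* u \<equiv> red\<^sup>*\<^sup>* t u"

datatype ty = TVar nat | Bot | Arr ty ty (infixr "\<Rightarrow>\<^sub>T" 60)

inductive typing :: "ty list \<Rightarrow> trm \<Rightarrow> ty \<Rightarrow> ty list \<Rightarrow> bool" where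
  ax:   "i < length \<Gamma> \<Longrightarrow> typing \<Gamma> (LVar i) (\<Gamma> ! i) \<Delta>"
| arrI: "typing (A # \<Gamma>) t B \<Delta> \<Longrightarrow> typing \<Gamma> (Lam t) (A \<Rightarrow>\<^sub>T B) \<Delta>"
| arrE: "typing \<Gamma> u (A \<Rightarrow>\<^sub>T B) \<Delta> \<Longrightarrow> typing \<Gamma> v A \<Delta> \<Longrightarrow> typing \<Gamma> (App u v) B \<Delta>"
| muI:  "typing \<Gamma> t Bot (A # \<Delta>) \<Longrightarrow> typing \<Gamma> (Mu t) A \<Delta>"
| botI: "a < length \<Delta> \<Longrightarrow> typing \<Gamma> t (\<Delta> ! a) \<Delta> \<Longrightarrow> typing \<Gamma> (Named a t) Bot \<Delta>"

text \<open>Closed terms: no free lambda- or mu-variables (k, m = number of enclosing binders).\<close>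
fun closed_at :: "nat \<Rightarrow> nat \<Rightarrow> trm \<Rightarrow> bool" where
  "closed_at k m (LVar i) = (i < k)"
| "closed_at k m (Lam t) = closed_at (Suc k) m t"
| "closed_at k m (App t u) = (closed_at k m t \<and> closed_at k m u)"
| "closed_at k m (Mu t) = closed_at k (Suc m) t"
| "closed_at k m (Named a t) = (a < m \<and> closed_at k m t)"

definition closed :: "trm \<Rightarrow> bool" where
  "closed t \<longleftrightarrow> closed_at 0 0 t"

definition apps :: "trm \<Rightarrow> trm list \<Rightarrow> trm" where
  "apps t us = foldl App t us"

inductive_set Mset :: "trm \<Rightarrow> trm set" for t :: trm where
  base: "t \<in> Mset t"
| mu:   "u \<in> Mset t \<Longrightarrow> Mu u \<in> Mset t"
| named: "u \<in> Mset t \<Longrightarrow> Named a u \<in> Mset t"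

end

theory Submission imports Defs begin

text \<open>A realizability argument. Each type \<open>A\<close> is read as a set of stacks (argument lists):
  a propositional variable admits any list of \<open>\<lambda>\<close>-variables, \<open>\<bottom>\<close> only the empty stack, and
  \<open>A \<rightarrow> B\<close> the stacks \<open>u # s\<close> with \<open>u\<close> realizing \<open>A\<close> and \<open>s\<close> a \<open>B\<close>-stack. A term realizes \<open>A\<close>
  if, applied to any \<open>A\<close>-stack, it reduces into \<open>M\<^sub>x\<close>. Every typed term realizes its type
  (adequacy); the crucial case is \<open>\<mu>a.t\<close>, whose application to a stack \<open>s\<close> reduces to
  \<open>\<mu>a.t'\<close> where \<open>s\<close> has been appended to every subterm named \<open>a\<close>, and \<open>(a w)\<close> then
  lands in \<open>M\<^sub>x\<close> because \<open>w\<close> realizes the type of \<open>a\<close>. Finally the stack \<open>x, y\<^sub>1, \<dots>, y\<^sub>n\<close>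
  is a \<open>\<bottom> \<rightarrow> X\<close>-stack, since \<open>x\<close> itself lies in \<open>M\<^sub>x\<close>.\<close>

definition ren_up :: "(nat \<Rightarrow> nat) \<Rightarrow> nat \<Rightarrow> nat" where
  "ren_up \<rho> j = (case j of 0 \<Rightarrow> 0 | Suc k \<Rightarrow> Suc (\<rho> k))"

lemma ren_up_0 [simp]: "ren_up \<rho> 0 = 0"
  and ren_up_Suc [simp]: "ren_up \<rho> (Suc k) = Suc (\<rho> k)"
  by (simp_all add: ren_up_def)

lemma ren_up_comp [simp]: "ren_up \<rho> \<circ> ren_up \<rho>' = ren_up (\<rho> \<circ> \<rho>')"
  by (auto simp: fun_eq_iff ren_up_def split: nat.split)

lemma ren_up_Suc_comp [simp]: "ren_up \<rho> \<circ> Suc = Suc \<circ> \<rho>"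
  by (auto simp: fun_eq_iff)

lemma ren_up_id [simp]: "ren_up id = id" "ren_up (\<lambda>x. x) = (\<lambda>x. x)"
  by (auto simp: fun_eq_iff ren_up_def split: nat.split)

fun mren :: "(nat \<Rightarrow> nat) \<Rightarrow> trm \<Rightarrow> trm" where
  "mren \<rho> (LVar i) = LVar i"
| "mren \<rho> (Lam t) = Lam (mren \<rho> t)"
| "mren \<rho> (App t u) = App (mren \<rho> t) (mren \<rho> u)"
| "mren \<rho> (Mu t) = Mu (mren (ren_up \<rho>) t)"
| "mren \<rho> (Named a t) = Named (\<rho> a) (mren \<rho> t)"

lemma mren_mren [simp]: "mren \<rho> (mren \<rho>' t) = mren (\<rho> \<circ> \<rho>') t"
  by (induction t arbitrary: \<rho> \<rho>') auto

lemma mren_id [simp]: "mren id t = t"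
  by (induction t) (auto simp flip: id_def)

lemma liftM_eq_mren: "liftM k t = mren (\<lambda>j. if j < k then j else Suc j) t"
proof (induction t arbitrary: k)
  case (Mu t)
  have "ren_up (\<lambda>j. if j < k then j else Suc j) = (\<lambda>j. if j < Suc k then j else Suc j)"
    by (auto simp: fun_eq_iff ren_up_def split: nat.split)
  with Mu show ?case by simp
qed auto

lemma liftM_0 [simp]: "liftM 0 t = mren Suc t"
  by (simp add: liftM_eq_mren)

lemma mren_liftL [simp]: "mren \<rho> (liftL k t) = liftL k (mren \<rho> t)"
  by (induction t arbitrary: \<rho> k) auto

lemma mren_substL: "mren \<rho> (substL t k u) = substL (mren \<rho> t) k (mren \<rho> u)"
  by (induction t arbitrary: \<rho> k u) auto

lemma mren_substM:
  assumes "\<forall>b. \<rho> b = \<rho> a \<longrightarrow> b = a"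
  shows "mren \<rho> (substM t a v) = substM (mren \<rho> t) (\<rho> a) (mren \<rho> v)"
  using assms
proof (induction t arbitrary: \<rho> a v)
  case (Mu t)
  have "\<forall>b. ren_up \<rho> b = ren_up \<rho> (Suc a) \<longrightarrow> b = Suc a"
    using Mu.prems by (auto simp: ren_up_def split: nat.split)
  from Mu.IH[OF this] show ?case by simp
qed auto

lemma substM_mren_fresh:
  assumes "\<forall>b. \<rho> b \<noteq> a"
  shows "substM (mren \<rho> s) a v = mren \<rho> s"
  using assms
proof (induction s arbitrary: \<rho> a v)
  case (Mu t)
  have "\<forall>b. ren_up \<rho> b \<noteq> Suc a"
    using Mu.prems by (auto simp: ren_up_def split: nat.split)
  from Mu.IH[OF this] show ?case by simp
qed auto

lemma liftL_liftL: "i \<le> j \<Longrightarrow> liftL i (liftL j u) = liftL (Suc j) (liftL i u)"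
  by (induction u arbitrary: i j) auto

lemma substL_liftL: "substL (liftL k s) k u = s"
  by (induction s arbitrary: k u) auto

lemma substL_liftL_commute:
  "j \<le> k \<Longrightarrow> substL (liftL j s) (Suc k) (liftL j u) = liftL j (substL s k u)"
  by (induction s arbitrary: j k u) (auto simp: liftL_liftL)

lemma substM_liftL: "substM (liftL j s) a (liftL j v) = liftL j (substM s a v)"
  by (induction s arbitrary: j a v) (auto simp: liftL_liftL)

lemma apps_Nil [simp]: "apps t [] = t"
  and apps_Cons [simp]: "apps t (u # s) = apps (App t u) s"
  and apps_snoc: "apps t (s @ [v]) = App (apps t s) v"
  by (simp_all add: apps_def)

lemma mren_apps [simp]: "mren \<rho> (apps t s) = apps (mren \<rho> t) (map (mren \<rho>) s)"
  by (induction s arbitrary: t) auto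

lemma substL_apps [simp]:
  "substL (apps t s) k u = apps (substL t k u) (map (\<lambda>w. substL w k u) s)"
  by (induction s arbitrary: t) auto

lemma substM_apps [simp]:
  "substM (apps t s) a v = apps (substM t a v) (map (\<lambda>w. substM w a v) s)"
  by (induction s arbitrary: t) auto

text \<open>Simultaneous substitution: \<open>\<lambda>\<close>-variable \<open>i\<close> becomes \<open>\<sigma> i\<close>, and every subterm
  \<open>(a w)\<close> becomes \<open>(\<rho> a) (w (\<tau> a))\<close>, i.e. the stack \<open>\<tau> a\<close> is appended to it.
  This is the shape of a term after a \<open>\<mu>\<close>-redex has consumed several arguments.\<close>

fun gsubst :: "(nat \<Rightarrow> trm) \<Rightarrow> (nat \<Rightarrow> trm list) \<Rightarrow> (nat \<Rightarrow> nat) \<Rightarrow> trm \<Rightarrow> trm" where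
  "gsubst \<sigma> \<tau> \<rho> (LVar i) = \<sigma> i"
| "gsubst \<sigma> \<tau> \<rho> (Lam t) =
     Lam (gsubst (\<lambda>i. case i of 0 \<Rightarrow> LVar 0 | Suc j \<Rightarrow> liftL 0 (\<sigma> j))
                 (\<lambda>j. map (liftL 0) (\<tau> j)) \<rho> t)"
| "gsubst \<sigma> \<tau> \<rho> (App t u) = App (gsubst \<sigma> \<tau> \<rho> t) (gsubst \<sigma> \<tau> \<rho> u)"
| "gsubst \<sigma> \<tau> \<rho> (Mu t) =
     Mu (gsubst (\<lambda>i. mren Suc (\<sigma> i))
                (\<lambda>j. case j of 0 \<Rightarrow> [] | Suc k \<Rightarrow> map (mren Suc) (\<tau> k)) (ren_up \<rho>) t)"
| "gsubst \<sigma> \<tau> \<rho> (Named a t) = Named (\<rho> a) (apps (gsubst \<sigma> \<tau> \<rho> t) (\<tau> a))"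

lemma gsubst_id: "gsubst LVar (\<lambda>_. []) id t = t"
proof -
  have "gsubst \<sigma> \<tau> \<rho> t = t" if "\<forall>i. \<sigma> i = LVar i" "\<forall>j. \<tau> j = []" "\<forall>j. \<rho> j = j"
    for \<sigma> \<tau> \<rho>
    using that
  proof (induction t arbitrary: \<sigma> \<tau> \<rho>)
    case (Lam t)
    show ?case
      by (simp, rule Lam.IH) (use Lam.prems in \<open>auto split: nat.split\<close>)
  next
    case (Mu t)
    show ?case
      by (simp, rule Mu.IH) (use Mu.prems in \<open>auto simp: ren_up_def split: nat.split\<close>)
  qed auto
  then show ?thesis by simp
qed

lemma mren_gsubst:
  "mren \<rho>' (gsubst \<sigma> \<tau> \<rho> t) = gsubst (\<lambda>i. mren \<rho>' (\<sigma> i)) (\<lambda>j. map (mren \<rho>') (\<tau> j)) (\<rho>' \<circ> \<rho>) t"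
proof (induction t arbitrary: \<sigma> \<tau> \<rho> \<rho>')
  case (Lam t)
  have "(\<lambda>i. mren \<rho>' (case i of 0 \<Rightarrow> LVar 0 | Suc j \<Rightarrow> liftL 0 (\<sigma> j))) =
        (\<lambda>i. case i of 0 \<Rightarrow> LVar 0 | Suc j \<Rightarrow> liftL 0 (mren \<rho>' (\<sigma> j)))"
    by (auto simp: fun_eq_iff split: nat.split)
  then show ?case by (simp add: Lam.IH comp_def)
next
  case (Mu t)
  have "(\<lambda>j. map (mren (ren_up \<rho>')) (case j of 0 \<Rightarrow> [] | Suc k \<Rightarrow> map (mren Suc) (\<tau> k))) =
        (\<lambda>j. case j of 0 \<Rightarrow> [] | Suc k \<Rightarrow> map (mren Suc) (map (mren \<rho>') (\<tau> k)))"
    by (auto simp: fun_eq_iff split: nat.split)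
  then show ?case
    by (simp add: Mu.IH)
       (auto intro!: arg_cong2[where f = "\<lambda>\<sigma> \<tau>. gsubst \<sigma> \<tau> _ t"] simp: fun_eq_iff comp_def split: nat.split)
qed auto

lemma substL_gsubst:
  "substL (gsubst \<sigma> \<tau> \<rho> t) k u =
   gsubst (\<lambda>i. substL (\<sigma> i) k u) (\<lambda>j. map (\<lambda>w. substL w k u) (\<tau> j)) \<rho> t"
proof (induction t arbitrary: \<sigma> \<tau> \<rho> k u)
  case (Lam t)
  have "(\<lambda>i. substL (case i of 0 \<Rightarrow> LVar 0 | Suc j \<Rightarrow> liftL 0 (\<sigma> j)) (Suc k) (liftL 0 u)) =
        (\<lambda>i. case i of 0 \<Rightarrow> LVar 0 | Suc j \<Rightarrow> liftL 0 (substL (\<sigma> j) k u))"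
    by (auto simp: fun_eq_iff substL_liftL_commute split: nat.split)
  then show ?case by (simp add: Lam.IH substL_liftL_commute comp_def)
next
  case (Mu t)
  show ?case
    by (simp add: Mu.IH mren_substL)
       (auto intro!: arg_cong2[where f = "\<lambda>\<sigma> \<tau>. gsubst \<sigma> \<tau> _ t"]
         simp: fun_eq_iff mren_substL split: nat.split)
qed auto

lemma substM_gsubst:
  "substM (gsubst \<sigma> \<tau> \<rho> t) a v =
   gsubst (\<lambda>i. substM (\<sigma> i) a v)
          (\<lambda>j. if \<rho> j = a then map (\<lambda>w. substM w a v) (\<tau> j) @ [v]
               else map (\<lambda>w. substM w a v) (\<tau> j)) \<rho> t"
proof (induction t arbitrary: \<sigma> \<tau> \<rho> a v)
  case (Lam t)
  have "(\<lambda>i. substM (case i of 0 \<Rightarrow> LVar 0 | Suc j \<Rightarrow> liftL 0 (\<sigma> j)) a (liftL 0 v)) =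
        (\<lambda>i. case i of 0 \<Rightarrow> LVar 0 | Suc j \<Rightarrow> liftL 0 (substM (\<sigma> j) a v))"
    by (auto simp: fun_eq_iff substM_liftL split: nat.split)
  moreover have
    "(\<lambda>j. if \<rho> j = a then map (\<lambda>w. substM w a (liftL 0 v)) (map (liftL 0) (\<tau> j)) @ [liftL 0 v]
          else map (\<lambda>w. substM w a (liftL 0 v)) (map (liftL 0) (\<tau> j))) =
     (\<lambda>j. map (liftL 0) (if \<rho> j = a then map (\<lambda>w. substM w a v) (\<tau> j) @ [v]
          else map (\<lambda>w. substM w a v) (\<tau> j)))"
    by (auto simp: fun_eq_iff substM_liftL)
  ultimately show ?case by (simp add: Lam.IH)
next
  case (Mu t)
  have Suc_inj: "\<forall>b. Suc b = Suc a \<longrightarrow> b = a" by simp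
  have "(\<lambda>i. substM (mren Suc (\<sigma> i)) (Suc a) (mren Suc v)) = (\<lambda>i. mren Suc (substM (\<sigma> i) a v))"
    using mren_substM[OF Suc_inj] by simp
  moreover have
    "(\<lambda>j. if ren_up \<rho> j = Suc a
          then map (\<lambda>w. substM w (Suc a) (mren Suc v))
                 (case j of 0 \<Rightarrow> [] | Suc k \<Rightarrow> map (mren Suc) (\<tau> k)) @ [mren Suc v]
          else map (\<lambda>w. substM w (Suc a) (mren Suc v))
                 (case j of 0 \<Rightarrow> [] | Suc k \<Rightarrow> map (mren Suc) (\<tau> k))) =
     (\<lambda>j. case j of 0 \<Rightarrow> [] | Suc k \<Rightarrow> map (mren Suc)
          (if \<rho> k = a then map (\<lambda>w. substM w a v) (\<tau> k) @ [v] else map (\<lambda>w. substM w a v) (\<tau> k)))"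
    using mren_substM[OF Suc_inj] by (auto simp: fun_eq_iff split: nat.split)
  ultimately show ?case by (simp add: Mu.IH)
qed (auto simp: apps_snoc)

lemma red_mren: "t \<rhd> t' \<Longrightarrow> mren \<rho> t \<rhd> mren \<rho> t'"
proof (induction arbitrary: \<rho> rule: red.induct)
  case (beta u v)
  show ?case using red.beta[of "mren \<rho> u" "mren \<rho> v"] by (simp add: mren_substL)
next
  case (mu u v)
  have "\<forall>b. ren_up \<rho> b = ren_up \<rho> 0 \<longrightarrow> b = 0"
    by (auto simp: ren_up_def split: nat.split)
  then show ?case
    using red.mu[of "mren (ren_up \<rho>) u" "mren \<rho> v"] mren_substM[of _ 0 u "mren Suc v"] by simp
qed (auto intro: red.intros)

lemma reds_mren: "t \<rhd>\<^sup>* t' \<Longrightarrow> mren \<rho> t \<rhd>\<^sup>* mren \<rho> t'"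
  by (induction rule: rtranclp_induct) (auto intro: rtranclp.rtrancl_into_rtrancl red_mren)

lemma reds_App1: "t \<rhd>\<^sup>* t' \<Longrightarrow> App t u \<rhd>\<^sup>* App t' u"
  by (induction rule: rtranclp_induct) (auto intro: rtranclp.rtrancl_into_rtrancl red.appL)

lemma reds_Mu: "t \<rhd>\<^sup>* t' \<Longrightarrow> Mu t \<rhd>\<^sup>* Mu t'"
  by (induction rule: rtranclp_induct) (auto intro: rtranclp.rtrancl_into_rtrancl red.muC)

lemma reds_Named: "t \<rhd>\<^sup>* t' \<Longrightarrow> Named a t \<rhd>\<^sup>* Named a t'"
  by (induction rule: rtranclp_induct) (auto intro: rtranclp.rtrancl_into_rtrancl red.named)

lemma reds_apps: "t \<rhd>\<^sup>* t' \<Longrightarrow> apps t s \<rhd>\<^sup>* apps t' s"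
  by (induction s arbitrary: t t') (auto intro: reds_App1)

text \<open>The freshness hypotheses say that \<open>a = 0\<close> occurs neither in \<open>\<sigma>\<close> nor in \<open>\<tau>\<close>, so the
  structural substitution only acts on the named subterms produced by \<open>gsubst\<close>.\<close>

lemma reds_Mu_apps:
  assumes \<sigma>_fresh: "\<forall>i w. substM (\<sigma> i) 0 w = \<sigma> i"
    and \<tau>_fresh: "\<forall>j w. map (\<lambda>u. substM u 0 w) (\<tau> j) = \<tau> j"
    and \<rho>_0: "\<forall>j. \<rho> j = 0 \<longleftrightarrow> j = 0"
  shows "apps (Mu (gsubst \<sigma> \<tau> \<rho> t)) s \<rhd>\<^sup>* Mu (gsubst \<sigma> (\<tau>(0 := \<tau> 0 @ map (mren Suc) s)) \<rho> t)"
  using \<tau>_fresh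
proof (induction s arbitrary: \<tau>)
  case Nil
  then show ?case by simp
next
  case (Cons v s)
  define \<tau>' where "\<tau>' = \<tau>(0 := \<tau> 0 @ [mren Suc v])"
  have "substM (gsubst \<sigma> \<tau> \<rho> t) 0 (mren Suc v) = gsubst \<sigma> \<tau>' \<rho> t"
    unfolding substM_gsubst \<tau>'_def
    by (rule arg_cong2[where f = "\<lambda>\<sigma> \<tau>. gsubst \<sigma> \<tau> \<rho> t"])
       (use \<sigma>_fresh \<rho>_0 Cons.prems in \<open>simp_all add: fun_eq_iff\<close>)
  then have "App (Mu (gsubst \<sigma> \<tau> \<rho> t)) v \<rhd> Mu (gsubst \<sigma> \<tau>' \<rho> t)"
    using red.mu[of "gsubst \<sigma> \<tau> \<rho> t" v] by simp
  then have "apps (Mu (gsubst \<sigma> \<tau> \<rho> t)) (v # s) \<rhd>\<^sup>* apps (Mu (gsubst \<sigma> \<tau>' \<rho> t)) s"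
    by (simp add: reds_apps r_into_rtranclp)
  also have "\<dots> \<rhd>\<^sup>* Mu (gsubst \<sigma> (\<tau>'(0 := \<tau>' 0 @ map (mren Suc) s)) \<rho> t)"
    by (rule Cons.IH) (use Cons.prems in \<open>simp add: \<tau>'_def substM_mren_fresh\<close>)
  also have "\<tau>'(0 := \<tau>' 0 @ map (mren Suc) s) = \<tau>(0 := \<tau> 0 @ map (mren Suc) (v # s))"
    by (simp add: \<tau>'_def)
  finally show ?case .
qed

definition Mreach :: "nat \<Rightarrow> trm set" where
  "Mreach x = {t. \<exists>m \<in> Mset (LVar x). t \<rhd>\<^sup>* m}"

lemma Mset_LVar_mren: "m \<in> Mset (LVar x) \<Longrightarrow> mren \<rho> m \<in> Mset (LVar x)"
  by (induction arbitrary: \<rho> rule: Mset.induct) (auto intro: Mset.intros)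

lemma Mreach_mren: "t \<in> Mreach x \<Longrightarrow> mren \<rho> t \<in> Mreach x"
  unfolding Mreach_def using Mset_LVar_mren reds_mren by blast

lemma Mreach_reds: "t \<rhd>\<^sup>* t' \<Longrightarrow> t' \<in> Mreach x \<Longrightarrow> t \<in> Mreach x"
  unfolding Mreach_def by (auto intro: rtranclp_trans)

lemma Mreach_Mu: "t \<in> Mreach x \<Longrightarrow> Mu t \<in> Mreach x"
  unfolding Mreach_def by (auto intro: reds_Mu Mset.mu)

lemma Mreach_Named: "t \<in> Mreach x \<Longrightarrow> Named a t \<in> Mreach x"
  unfolding Mreach_def by (auto intro: reds_Named Mset.named)

lemma LVar_Mreach: "LVar x \<in> Mreach x"
  unfolding Mreach_def by (auto intro: Mset.base)

text \<open>The quantification over renamings \<open>\<rho>\<close> makes realizability stable under the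
  \<open>\<mu>\<close>-index shifts that occur when going under a \<open>\<mu>\<close>-binder.\<close>

fun good_stack :: "nat \<Rightarrow> ty \<Rightarrow> trm list \<Rightarrow> bool" where
  "good_stack x (TVar n) s \<longleftrightarrow> (\<exists>ys. s = map LVar ys)"
| "good_stack x Bot s \<longleftrightarrow> s = []"
| "good_stack x (A \<Rightarrow>\<^sub>T B) [] \<longleftrightarrow> False"
| "good_stack x (A \<Rightarrow>\<^sub>T B) (u # s) \<longleftrightarrow>
     (\<forall>\<rho> s'. good_stack x A s' \<longrightarrow> apps (mren \<rho> u) s' \<in> Mreach x) \<and> good_stack x B s"

definition realizes :: "nat \<Rightarrow> ty \<Rightarrow> trm \<Rightarrow> bool" where
  "realizes x A t \<longleftrightarrow> (\<forall>\<rho> s. good_stack x A s \<longrightarrow> apps (mren \<rho> t) s \<in> Mreach x)"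

lemma good_stack_Arr_iff:
  "good_stack x (A \<Rightarrow>\<^sub>T B) s \<longleftrightarrow> (\<exists>u s'. s = u # s' \<and> realizes x A u \<and> good_stack x B s')"
  by (cases s) (auto simp: realizes_def)

lemma realizesI:
  "(\<And>\<rho> s. good_stack x A s \<Longrightarrow> apps (mren \<rho> t) s \<in> Mreach x) \<Longrightarrow> realizes x A t"
  by (simp add: realizes_def)

lemma realizesD: "realizes x A t \<Longrightarrow> good_stack x A s \<Longrightarrow> apps (mren \<rho> t) s \<in> Mreach x"
  by (simp add: realizes_def)

lemma realizes_mren: "realizes x A t \<Longrightarrow> realizes x A (mren \<rho> t)"
  unfolding realizes_def by (metis mren_mren)

lemma good_stack_mren: "good_stack x A s \<Longrightarrow> good_stack x A (map (mren \<rho>) s)"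
  by (induction A arbitrary: s) (auto simp: good_stack_Arr_iff realizes_mren comp_def)

definition valid :: "nat \<Rightarrow> ty list \<Rightarrow> trm \<Rightarrow> ty \<Rightarrow> ty list \<Rightarrow> bool" where
  "valid x \<Gamma> t A \<Delta> \<longleftrightarrow>
     (\<forall>\<sigma> \<tau> \<rho>. (\<forall>i<length \<Gamma>. realizes x (\<Gamma> ! i) (\<sigma> i)) \<longrightarrow>
       (\<forall>j<length \<Delta>. good_stack x (\<Delta> ! j) (\<tau> j)) \<longrightarrow> realizes x A (gsubst \<sigma> \<tau> \<rho> t))"

lemma validI:
  "(\<And>\<sigma> \<tau> \<rho>. \<forall>i<length \<Gamma>. realizes x (\<Gamma> ! i) (\<sigma> i) \<Longrightarrow>
     \<forall>j<length \<Delta>. good_stack x (\<Delta> ! j) (\<tau> j) \<Longrightarrow> realizes x A (gsubst \<sigma> \<tau> \<rho> t))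
   \<Longrightarrow> valid x \<Gamma> t A \<Delta>"
  by (simp add: valid_def)

lemma validD:
  "valid x \<Gamma> t A \<Delta> \<Longrightarrow> \<forall>i<length \<Gamma>. realizes x (\<Gamma> ! i) (\<sigma> i) \<Longrightarrow>
   \<forall>j<length \<Delta>. good_stack x (\<Delta> ! j) (\<tau> j) \<Longrightarrow> realizes x A (gsubst \<sigma> \<tau> \<rho> t)"
  by (simp add: valid_def)

lemma valid_LVar: "i < length \<Gamma> \<Longrightarrow> valid x \<Gamma> (LVar i) (\<Gamma> ! i) \<Delta>"
  by (rule validI) simp

lemma valid_Lam:
  assumes body: "valid x (A # \<Gamma>) t B \<Delta>"
  shows "valid x \<Gamma> (Lam t) (A \<Rightarrow>\<^sub>T B) \<Delta>"
proof (rule validI, rule realizesI)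
  fix \<sigma> \<tau> \<rho> \<rho>' s
  assume \<sigma>: "\<forall>i<length \<Gamma>. realizes x (\<Gamma> ! i) (\<sigma> i)"
    and \<tau>: "\<forall>j<length \<Delta>. good_stack x (\<Delta> ! j) (\<tau> j)"
    and "good_stack x (A \<Rightarrow>\<^sub>T B) s"
  then obtain u s' where s: "s = u # s'" and u: "realizes x A u" and s': "good_stack x B s'"
    by (auto simp: good_stack_Arr_iff)
  define \<sigma>' where "\<sigma>' = (\<lambda>i. case i of 0 \<Rightarrow> u | Suc j \<Rightarrow> mren \<rho>' (\<sigma> j))"
  define W where "W = gsubst (\<lambda>i. case i of 0 \<Rightarrow> LVar 0 | Suc j \<Rightarrow> liftL 0 (\<sigma> j))
                            (\<lambda>j. map (liftL 0) (\<tau> j)) \<rho> t"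
  have contracted: "substL (mren \<rho>' W) 0 u = gsubst \<sigma>' (\<lambda>j. map (mren \<rho>') (\<tau> j)) (\<rho>' \<circ> \<rho>) t"
    unfolding W_def mren_gsubst substL_gsubst
    by (rule arg_cong2[where f = "\<lambda>\<sigma> \<tau>. gsubst \<sigma> \<tau> _ t"])
       (auto simp: fun_eq_iff \<sigma>'_def substL_liftL split: nat.split)
  have "realizes x B (gsubst \<sigma>' (\<lambda>j. map (mren \<rho>') (\<tau> j)) (\<rho>' \<circ> \<rho>) t)"
  proof (rule validD[OF body])
    show "\<forall>i<length (A # \<Gamma>). realizes x ((A # \<Gamma>) ! i) (\<sigma>' i)"
      using u \<sigma> by (auto simp: \<sigma>'_def nth_Cons realizes_mren split: nat.split)
    show "\<forall>j<length \<Delta>. good_stack x (\<Delta> ! j) (map (mren \<rho>') (\<tau> j))"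
      using \<tau> by (simp add: good_stack_mren)
  qed
  then have "apps (substL (mren \<rho>' W) 0 u) s' \<in> Mreach x"
    using realizesD[OF _ s', where \<rho> = id] by (simp add: contracted)
  moreover have "apps (mren \<rho>' (gsubst \<sigma> \<tau> \<rho> (Lam t))) s \<rhd>\<^sup>* apps (substL (mren \<rho>' W) 0 u) s'"
    by (simp add: s W_def reds_apps r_into_rtranclp red.beta)
  ultimately show "apps (mren \<rho>' (gsubst \<sigma> \<tau> \<rho> (Lam t))) s \<in> Mreach x"
    by (rule Mreach_reds[rotated])
qed

lemma valid_App:
  assumes rator: "valid x \<Gamma> u (A \<Rightarrow>\<^sub>T B) \<Delta>" and arg: "valid x \<Gamma> v A \<Delta>"
  shows "valid x \<Gamma> (App u v) B \<Delta>"
proof (rule validI, rule realizesI)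
  fix \<sigma> \<tau> \<rho> \<rho>' s
  assume \<sigma>: "\<forall>i<length \<Gamma>. realizes x (\<Gamma> ! i) (\<sigma> i)"
    and \<tau>: "\<forall>j<length \<Delta>. good_stack x (\<Delta> ! j) (\<tau> j)"
    and s: "good_stack x B s"
  have "realizes x A (mren \<rho>' (gsubst \<sigma> \<tau> \<rho> v))"
    using validD[OF arg \<sigma> \<tau>] by (rule realizes_mren)
  with s have "good_stack x (A \<Rightarrow>\<^sub>T B) (mren \<rho>' (gsubst \<sigma> \<tau> \<rho> v) # s)"
    using good_stack_Arr_iff by blast
  from realizesD[OF validD[OF rator \<sigma> \<tau>] this, where \<rho> = \<rho>']
  show "apps (mren \<rho>' (gsubst \<sigma> \<tau> \<rho> (App u v))) s \<in> Mreach x"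
    by simp
qed

lemma valid_Mu:
  assumes body: "valid x \<Gamma> t Bot (A # \<Delta>)"
  shows "valid x \<Gamma> (Mu t) A \<Delta>"
proof (rule validI, rule realizesI)
  fix \<sigma> \<tau> \<rho> \<rho>' s
  assume \<sigma>: "\<forall>i<length \<Gamma>. realizes x (\<Gamma> ! i) (\<sigma> i)"
    and \<tau>: "\<forall>j<length \<Delta>. good_stack x (\<Delta> ! j) (\<tau> j)"
    and s: "good_stack x A s"
  define \<sigma>' where "\<sigma>' = (\<lambda>i. mren (Suc \<circ> \<rho>') (\<sigma> i))"
  define \<tau>' where "\<tau>' = (\<lambda>j. case j of 0 \<Rightarrow> [] | Suc k \<Rightarrow> map (mren (Suc \<circ> \<rho>')) (\<tau> k))"
  define \<rho>'' where "\<rho>'' = ren_up (\<rho>' \<circ> \<rho>)"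
  define \<tau>s where "\<tau>s = \<tau>'(0 := map (mren Suc) s)"
  have "mren \<rho>' (gsubst \<sigma> \<tau> \<rho> (Mu t)) = Mu (gsubst \<sigma>' \<tau>' \<rho>'' t)"
    unfolding \<sigma>'_def \<tau>'_def \<rho>''_def
    by (simp add: mren_gsubst) (auto intro!: arg_cong2[where f = "\<lambda>\<sigma> \<tau>. gsubst \<sigma> \<tau> _ t"]
        simp: fun_eq_iff split: nat.split)
  moreover have "apps (Mu (gsubst \<sigma>' \<tau>' \<rho>'' t)) s \<rhd>\<^sup>* Mu (gsubst \<sigma>' \<tau>s \<rho>'' t)"
  proof -
    have "apps (Mu (gsubst \<sigma>' \<tau>' \<rho>'' t)) s \<rhd>\<^sup>* Mu (gsubst \<sigma>' (\<tau>'(0 := \<tau>' 0 @ map (mren Suc) s)) \<rho>'' t)"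
      by (rule reds_Mu_apps)
         (auto simp: \<sigma>'_def \<tau>'_def \<rho>''_def ren_up_def substM_mren_fresh[where \<rho> = "Suc \<circ> _", simplified]
               map_idI split: nat.split)
    then show ?thesis by (simp add: \<tau>s_def \<tau>'_def)
  qed
  moreover have "realizes x Bot (gsubst \<sigma>' \<tau>s \<rho>'' t)"
  proof (rule validD[OF body])
    show "\<forall>i<length \<Gamma>. realizes x (\<Gamma> ! i) (\<sigma>' i)"
      using \<sigma> by (simp add: \<sigma>'_def realizes_mren)
    show "\<forall>j<length (A # \<Delta>). good_stack x ((A # \<Delta>) ! j) (\<tau>s j)"
      using s \<tau> by (auto simp: \<tau>s_def \<tau>'_def nth_Cons good_stack_mren split: nat.split)
  qed
  then have "gsubst \<sigma>' \<tau>s \<rho>'' t \<in> Mreach x"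
    using realizesD[of x Bot _ "[]" id] by simp
  ultimately show "apps (mren \<rho>' (gsubst \<sigma> \<tau> \<rho> (Mu t))) s \<in> Mreach x"
    by (metis Mreach_Mu Mreach_reds)
qed

lemma valid_Named:
  assumes "a < length \<Delta>" and body: "valid x \<Gamma> t (\<Delta> ! a) \<Delta>"
  shows "valid x \<Gamma> (Named a t) Bot \<Delta>"
proof (rule validI, rule realizesI)
  fix \<sigma> \<tau> \<rho> \<rho>' s
  assume \<sigma>: "\<forall>i<length \<Gamma>. realizes x (\<Gamma> ! i) (\<sigma> i)"
    and \<tau>: "\<forall>j<length \<Delta>. good_stack x (\<Delta> ! j) (\<tau> j)"
    and "good_stack x Bot s"
  then have "s = []" by simp
  have "good_stack x (\<Delta> ! a) (map (mren \<rho>') (\<tau> a))"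
    using \<tau> \<open>a < length \<Delta>\<close> by (simp add: good_stack_mren)
  then have "apps (mren \<rho>' (gsubst \<sigma> \<tau> \<rho> t)) (map (mren \<rho>') (\<tau> a)) \<in> Mreach x"
    using validD[OF body \<sigma> \<tau>] by (rule realizesD[rotated])
  then show "apps (mren \<rho>' (gsubst \<sigma> \<tau> \<rho> (Named a t))) s \<in> Mreach x"
    by (simp add: \<open>s = []\<close> Mreach_Named)
qed

lemma typing_valid: "typing \<Gamma> t A \<Delta> \<Longrightarrow> valid x \<Gamma> t A \<Delta>"
  by (induction rule: typing.induct)
     (auto intro: valid_LVar valid_Lam valid_App valid_Mu valid_Named)

theorem mainTheorem7:
  fixes e :: trm and X :: nat and x :: nat and ys :: "nat list"
  assumes "closed e"
    and "typing [] e (Bot \<Rightarrow>\<^sub>T TVar X) []"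
  shows "\<exists>t \<in> Mset (LVar x). apps (App e (LVar x)) (map LVar ys) \<rhd>\<^sup>* t"
proof -
  have "realizes x (Bot \<Rightarrow>\<^sub>T TVar X) (gsubst LVar (\<lambda>_. []) id e)"
    using validD[OF typing_valid[OF assms(2)]] by simp
  then have "realizes x (Bot \<Rightarrow>\<^sub>T TVar X) e"
    by (simp add: gsubst_id)
  moreover have "good_stack x (Bot \<Rightarrow>\<^sub>T TVar X) (LVar x # map LVar ys)"
    by (auto simp: good_stack_Arr_iff realizes_def LVar_Mreach Mreach_mren[of "LVar x", simplified])
  ultimately have "apps e (LVar x # map LVar ys) \<in> Mreach x"
    using realizesD[where \<rho> = id] by fastforce
  then show ?thesis by (simp add: Mreach_def)
qed

end
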